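(* For every $a\in(0,1)$, the map $(r,x)\mapsto F(r,x,\cdot)$ is Lipschitz from $(\mathcal A^e_\infty(a),\|\cdot\|_p\times|\cdot|)$ to $(L^p(\mathbb S^{n-1}),\|\cdot\|_p)$, for both $p=2$ and $p=\infty$. In addition, $\|F(r,x,\cdot)\|_{\mathrm{Lip}}$ is bounded uniformly over $(r,x)\in\mathcal A^e_\infty(a)$, and $F(r,x,\theta)$ is bounded above and away from zero uniformly over $(r,x,\theta)\in\mathcal A^e_2(a)\times\mathbb S^{n-1}$.
   Context: $n\ge2$; $\mathbb S^{n-1}$ with surface measure $\sigma$, $\omega_n=\sigma(\mathbb S^{n-1})$; $\|\cdot\|_p$ the $L^p(\sigma)$ norm; $|\cdot|$ Euclidean norm; $C_+(\mathbb S^{n-1})$ strictly positive continuous functions. $(f\star g)(z):=\omega_n^{-1}\int f(\theta)g(\langle z,\theta\rangle)d\sigma(\theta)$; fix $\eta_0\in(0,1)$ and $g(t)=\frac{c}{\omega_{n-1}}\eta_0^{-(n-1)}\phi(1-\frac{1-t}{\eta_0^2})$ with $\phi\ge0$ continuous, vanishing outside $[-1,1]$, $C^3$ on $[-1,1]$, $\|\phi\|_\infty=1$, $c$ with $1\star g\equiv1$; $\widetilde r:=r\star g$, $D_{\widetilde r}:=\{\rho\theta:0\le\rho\le\widetilde r(\theta)\}$. Fix a locally Lipschitz $\alpha:(0,\infty)\times\mathbb S^{n-1}\to[0,\infty)$ with $0\le\alpha(\ell,z)<\ell$; $H(r,z):=\alpha(\widetilde r(z),z)z$. Fix a locally Lipschitz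 $\varphi:(0,\infty)\to(0,\infty)$ and set $F(r,x,\theta):=\varphi(|\widetilde r(\theta)\theta-x|)/\int\varphi(|\widetilde r(z)z-x|)d\sigma(z)$ for $(r,x)\in\mathcal D(F):=\{(r,x):x$ in the interior of $D_{\widetilde r}\}$. For $p\in\{2,\infty\}$: $\mathcal A_p(a):=\{r\in C_+:\inf r\ge a,\|r\|_p\le a^{-1}\}$, $\mathcal A^e_p(a):=\{(r,x)\in\mathcal D(F):r\in\mathcal A_p(a),\ x\in\mathrm{Image}(H(r',\cdot))$ for some $r'\in\mathcal A_p(a)$, $r'\le r\}$. $\|\cdot\|_{\mathrm{Lip}}$ is the Lipschitz constant on $\mathbb S^{n-1}$. *)

theory Defs
  imports "HOL-Analysis.Analysis"
begin

text \<open>Surface measure on the unit sphere of a Euclidean space of dimension n,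
  defined via the cone construction: sigma(A) = n * Leb({x in ball 0 1 - {0}. x/|x| in A}).\<close>
definition surf :: "'a::euclidean_space measure" where
  "surf = scale_measure (of_nat DIM('a))
      (distr (restrict_space lborel (ball 0 1 - {0})) (restrict_space borel (sphere 0 1))
             (\<lambda>x. x /\<^sub>R norm x))"

text \<open>Surface area of the unit sphere in R^m (i.e. omega_m = sigma(S^(m-1))).\<close>
definition omega :: "nat \<Rightarrow> real" where
  "omega m = 2 * pi powr (real m / 2) / Gamma (real m / 2)"

definition conv :: "('a::euclidean_space \<Rightarrow> real) \<Rightarrow> (real \<Rightarrow> real) \<Rightarrow> 'a \<Rightarrow> real" where
  "conv f g z = (LINT \<theta>|surf. f \<theta> * g (inner z \<theta>)) / measure (surf :: 'a measure) (sphere 0 1)"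

definition Dset :: "('a::euclidean_space \<Rightarrow> real) \<Rightarrow> 'a set" where
  "Dset f = {\<rho> *\<^sub>R \<theta> | \<rho> \<theta>. \<theta> \<in> sphere 0 1 \<and> 0 \<le> \<rho> \<and> \<rho> \<le> f \<theta>}"

definition Fw :: "(real \<Rightarrow> real) \<Rightarrow> (real \<Rightarrow> real) \<Rightarrow> ('a::euclidean_space \<Rightarrow> real) \<Rightarrow> 'a \<Rightarrow> 'a \<Rightarrow> real" where
  "Fw g w r x \<theta> = w (norm (conv r g \<theta> *\<^sub>R \<theta> - x))
      / (LINT z|surf. w (norm (conv r g z *\<^sub>R z - x)))"

definition domF :: "(real \<Rightarrow> real) \<Rightarrow> ('a::euclidean_space \<Rightarrow> real) \<Rightarrow> 'a \<Rightarrow> bool" where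
  "domF g r x \<longleftrightarrow> x \<in> interior (Dset (conv r g))"

definition Cplus :: "('a::euclidean_space \<Rightarrow> real) \<Rightarrow> bool" where
  "Cplus r \<longleftrightarrow> continuous_on (sphere 0 1) r \<and> (\<forall>\<theta>\<in>sphere 0 1. 0 < r \<theta>)"

definition norm2 :: "('a::euclidean_space \<Rightarrow> real) \<Rightarrow> real" where
  "norm2 f = sqrt (LINT \<theta>|surf. (f \<theta>)\<^sup>2)"

definition normInf :: "('a::euclidean_space \<Rightarrow> real) \<Rightarrow> real" where
  "normInf f = (SUP \<theta>\<in>sphere 0 1. \<bar>f \<theta>\<bar>)"

definition Aset :: "(('a::euclidean_space \<Rightarrow> real) \<Rightarrow> real) \<Rightarrow> real \<Rightarrow> ('a \<Rightarrow> real) set" where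
  "Aset N a = {r. Cplus r \<and> (\<forall>\<theta>\<in>sphere 0 1. a \<le> r \<theta>) \<and> N r \<le> 1 / a}"

definition Aeset :: "(real \<Rightarrow> real) \<Rightarrow> (real \<times> 'a::euclidean_space \<Rightarrow> real)
    \<Rightarrow> (('a \<Rightarrow> real) \<Rightarrow> real) \<Rightarrow> real \<Rightarrow> (('a \<Rightarrow> real) \<times> 'a) set" where
  "Aeset g \<alpha> N a = {(r, x). domF g r x \<and> r \<in> Aset N a \<and>
      (\<exists>r'\<in>Aset N a. (\<forall>\<theta>\<in>sphere 0 1. r' \<theta> \<le> r \<theta>) \<and>
         x \<in> (\<lambda>z. \<alpha> (conv r' g z, z) *\<^sub>R z) ` sphere 0 1)}"

definition locally_lipschitz_on :: "'a::metric_space set \<Rightarrow> ('a \<Rightarrow> 'b::metric_space) \<Rightarrow> bool" where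
  "locally_lipschitz_on S f \<longleftrightarrow> (\<forall>x\<in>S. \<exists>e>0. \<exists>L. lipschitz_on L (ball x e \<inter> S) f)"

definition C3_on :: "real set \<Rightarrow> (real \<Rightarrow> real) \<Rightarrow> bool" where
  "C3_on S f \<longleftrightarrow> (\<exists>f1 f2 f3. (\<forall>t\<in>S. (f has_real_derivative f1 t) (at t within S)
       \<and> (f1 has_real_derivative f2 t) (at t within S)
       \<and> (f2 has_real_derivative f3 t) (at t within S)) \<and> continuous_on S f3)"

end

theory Submission
  imports Defs
begin

text \<open>The convolution \<open>r \<star> g\<close> with the bounded Lipschitz kernel \<open>g\<close> is bounded below by
  \<open>inf r\<close>, bounded above by a multiple of \<open>\<parallel>r\<parallel>\<^sub>2\<close>, and Lipschitz on the sphere with constant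
  a multiple of \<open>\<parallel>r\<parallel>\<^sub>2\<close>; both \<open>\<A>\<^sub>\<infinity>(a)\<close> and \<open>\<A>\<^sub>2(a)\<close> lie in such an \<open>L\<^sup>2\<close>-bounded class.
  An admissible centre is \<open>x = \<alpha>(\<ell>, z) z\<close> with \<open>\<ell> = (r' \<star> g)(z) \<le> (r \<star> g)(z)\<close>, so it lies below the
  boundary point \<open>(r \<star> g)(z) z\<close> by at least the minimum of \<open>\<ell> - \<alpha>(\<ell>, z)\<close> over the compact set of
  possible \<open>(\<ell>, z)\<close>, which is positive. Together with the Lipschitz bound this keeps \<open>x\<close> at a
  uniform distance \<open>\<delta> > 0\<close> from the whole boundary \<open>{(r \<star> g)(\<theta>) \<theta>}\<close>. Hence the weight \<open>w\<close> is
  only evaluated on a compact interval \<open>[\<delta>, T] \<subseteq> (0, \<infinity>)\<close>, where it is bounded between positive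
  constants and Lipschitz, and these bounds survive the normalisation by
  \<open>\<integral> w(|(r \<star> g)(z) z - x|) d\<sigma>(z)\<close>.\<close>

definition radial_class :: "real \<Rightarrow> real \<Rightarrow> ('a::euclidean_space \<Rightarrow> real) set" where
  "radial_class a N =
     {r. continuous_on (sphere 0 1) r \<and> (\<forall>\<theta>\<in>sphere 0 1. a \<le> r \<theta>) \<and> norm2 r \<le> N}"

text \<open>The set \<open>\<A>\<^sup>e\<close> with an \<open>L\<^sup>2\<close>-bound \<open>N\<close> on \<open>r\<close> and without the requirement
  \<open>domF g r x\<close>; it contains \<open>\<A>\<^sup>e\<^sub>\<infinity>(a)\<close> for \<open>N = \<surd>\<omega>\<^sub>n / a\<close> and \<open>\<A>\<^sup>e\<^sub>2(a)\<close> for \<open>N = 1 / a\<close>.\<close>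
definition admissible_pairs ::
    "(real \<Rightarrow> real) \<Rightarrow> (real \<times> 'a::euclidean_space \<Rightarrow> real) \<Rightarrow> real \<Rightarrow> real \<Rightarrow> (('a \<Rightarrow> real) \<times> 'a) set"
  where
  "admissible_pairs g \<alpha> a N = {(r, x). r \<in> radial_class a N \<and>
     (\<exists>r'\<in>radial_class a N. (\<forall>\<theta>\<in>sphere 0 1. r' \<theta> \<le> r \<theta>) \<and>
        x \<in> (\<lambda>z. \<alpha> (conv r' g z, z) *\<^sub>R z) ` sphere 0 1)}"

definition boundary_dist :: "(real \<Rightarrow> real) \<Rightarrow> ('a::euclidean_space \<Rightarrow> real) \<Rightarrow> 'a \<Rightarrow> 'a \<Rightarrow> real" where
  "boundary_dist g r x \<theta> = norm (conv r g \<theta> *\<^sub>R \<theta> - x)"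

lemma Fw_eq_normalized:
  "Fw g w r x = (\<lambda>\<theta>. w (boundary_dist g r x \<theta>) / integral\<^sup>L surf (\<lambda>z. w (boundary_dist g r x z)))"
  by (simp add: Fw_def boundary_dist_def fun_eq_iff)

lemma Aset_norm2_subset_radial_class: "Aset norm2 a \<subseteq> radial_class a (1 / a)"
  by (auto simp: Aset_def Cplus_def radial_class_def)

lemma Aeset_subset_admissible_pairs:
  "Aset N a \<subseteq> radial_class a N' \<Longrightarrow> Aeset g \<alpha> N a \<subseteq> admissible_pairs g \<alpha> a N'"
  unfolding Aeset_def admissible_pairs_def by blast

lemma abs_divide_diff_le:
  fixes h h' D D' :: real
  assumes P: "0 < P" "P \<le> D" "P \<le> D'" and h: "\<bar>h - h'\<bar> \<le> A" "0 \<le> h'" "h' \<le> H"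
    and D: "\<bar>D - D'\<bar> \<le> B"
  shows "\<bar>h / D - h' / D'\<bar> \<le> A / P + H * B / P\<^sup>2"
proof -
  have "0 < D" "0 < D'" using P by auto
  then have "h / D - h' / D' = (h - h') / D + h' * (D' - D) / (D * D')"
    by (simp add: field_simps)
  also have "\<bar>\<dots>\<bar> \<le> \<bar>h - h'\<bar> / D + h' * \<bar>D - D'\<bar> / (D * D')"
    using \<open>0 < D\<close> \<open>0 < D'\<close> h(2) by (simp add: abs_mult abs_minus_commute abs_triangle_ineq[THEN order_trans])
  also have "\<dots> \<le> A / P + H * B / P\<^sup>2"
  proof (intro add_mono frac_le)
    show "h' * \<bar>D - D'\<bar> \<le> H * B" using h D by (intro mult_mono) auto
    show "P\<^sup>2 \<le> D * D'" using P by (simp add: power2_eq_square mult_mono)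
  qed (use P h D in auto)
  finally show ?thesis .
qed

lemma local_lipschitz_if_locally_lipschitz_on:
  assumes "locally_lipschitz_on S f"
  shows "local_lipschitz {0::real} S (\<lambda>_. f)"
proof (rule local_lipschitzI)
  fix t :: real and x assume "x \<in> S"
  then obtain e L where "0 < e" "L-lipschitz_on (ball x e \<inter> S) f"
    using assms unfolding locally_lipschitz_on_def by blast
  then have "L-lipschitz_on (cball x (e / 2) \<inter> S) f"
    by (elim lipschitz_on_subset) auto
  then show "\<exists>u>0. \<exists>L. \<forall>t\<in>cball t u \<inter> {0}. L-lipschitz_on (cball x u \<inter> S) f"
    using \<open>0 < e\<close> by (intro exI[of _ "e / 2"]) auto
qed

lemma locally_lipschitz_on_imp_continuous_on:
  "locally_lipschitz_on S f \<Longrightarrow> continuous_on S f"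
  using local_lipschitz_continuous_on local_lipschitz_if_locally_lipschitz_on by blast

lemma locally_lipschitz_on_compact_imp_lipschitz:
  assumes "locally_lipschitz_on S f" "compact T" "T \<subseteq> S"
  obtains L where "L-lipschitz_on T f"
  using local_lipschitz_compact_implies_lipschitz[of "{0::real}" T "\<lambda>_. f"]
    local_lipschitz_subset[OF local_lipschitz_if_locally_lipschitz_on[OF assms(1)] order_refl assms(3)]
    assms(2) by auto

lemma compact_continuous_pos_imp_bounded_below:
  fixes f :: "'a::topological_space \<Rightarrow> real"
  assumes "compact S" "continuous_on S f" "\<forall>x\<in>S. 0 < f x"
  obtains d where "0 < d" "\<forall>x\<in>S. d \<le> f x"
proof (cases "S = {}")
  case False
  then obtain x0 where "x0 \<in> S" "\<forall>x\<in>S. f x0 \<le> f x"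
    using continuous_attains_inf[OF assms(1) _ assms(2)] by blast
  then show ?thesis using that assms(3) by blast
qed (use that[of 1] in auto)

lemma locally_lipschitz_pos_bounds_on_Icc:
  fixes w :: "real \<Rightarrow> real"
  assumes w_lip: "locally_lipschitz_on {0<..} w" and w_pos: "\<forall>t>0. 0 < w t" and "0 < \<delta>"
  obtains m M L where "0 < m" "\<forall>t\<in>{\<delta>..T}. m \<le> w t \<and> w t \<le> M" "L-lipschitz_on {\<delta>..T} w"
proof -
  have sub: "{\<delta>..T} \<subseteq> {0<..}"
    using \<open>0 < \<delta>\<close> by auto
  have cont: "continuous_on {\<delta>..T} w"
    using continuous_on_subset[OF locally_lipschitz_on_imp_continuous_on[OF w_lip] sub] .
  obtain m where "0 < m" "\<forall>t\<in>{\<delta>..T}. m \<le> w t"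
    using compact_continuous_pos_imp_bounded_below[OF compact_Icc cont] w_pos sub by blast
  moreover obtain M where "\<forall>t\<in>{\<delta>..T}. w t \<le> M"
    using bounded_imp_bdd_above[OF compact_imp_bounded[OF compact_continuous_image[OF cont compact_Icc]]]
    by (auto simp: bdd_above_def)
  moreover obtain L where "L-lipschitz_on {\<delta>..T} w"
    using locally_lipschitz_on_compact_imp_lipschitz[OF w_lip compact_Icc sub] .
  ultimately show ?thesis
    using that by blast
qed

lemma norm_scaleR_diff_sphere_sq:
  fixes \<theta> z :: "'a::real_inner"
  assumes "norm \<theta> = 1" "norm z = 1"
  shows "(norm (\<rho> *\<^sub>R \<theta> - s *\<^sub>R z))\<^sup>2 = (\<rho> - s)\<^sup>2 + \<rho> * s * (norm (\<theta> - z))\<^sup>2"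
proof -
  have "inner \<theta> \<theta> = 1" "inner z z = 1" using assms by (simp_all add: dot_square_norm)
  then show ?thesis
    unfolding power2_norm_eq_inner
    by (simp add: inner_diff_left inner_diff_right inner_commute power2_eq_square algebra_simps)
qed

text \<open>If \<open>\<theta>\<close> is close to \<open>z\<close>, the radial gap \<open>\<rho> - s \<approx> R - s \<ge> d\<close> separates the two points;
  otherwise the angular term \<open>\<rho> s |\<theta> - z|\<^sup>2\<close> does, unless \<open>s\<close> is small, in which case \<open>\<rho> - s \<ge> a / 2\<close>.\<close>
lemma norm_scaleR_diff_sphere_ge:
  fixes \<theta> z :: "'a::real_inner"
  assumes unit: "norm \<theta> = 1" "norm z = 1" and a: "0 < a" "a \<le> \<rho>" and s: "0 \<le> s"
    and d: "0 < d" "s + d \<le> R" and L: "0 \<le> L" and lip: "\<bar>\<rho> - R\<bar> \<le> L * norm (\<theta> - z)"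
  shows "min (d / 2) (min (a / 2) (a * d / (4 * (L + 1)))) \<le> norm (\<rho> *\<^sub>R \<theta> - s *\<^sub>R z)"
proof -
  define \<epsilon> where "\<epsilon> = d / (2 * (L + 1))"
  have "0 < \<epsilon>" using d L by (simp add: \<epsilon>_def)
  have radial: "\<bar>\<rho> - s\<bar> \<le> norm (\<rho> *\<^sub>R \<theta> - s *\<^sub>R z)"
    using norm_triangle_ineq3[of "\<rho> *\<^sub>R \<theta>" "s *\<^sub>R z"] unit a s by simp
  consider "norm (\<theta> - z) \<le> \<epsilon>" | "s \<le> a / 2" | "\<epsilon> < norm (\<theta> - z)" "a / 2 < s" by linarith
  then show ?thesis
  proof cases
    case 1
    have "L * norm (\<theta> - z) \<le> L * \<epsilon>"
      using 1 L by (rule mult_left_mono)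
    also have "\<dots> \<le> d / 2"
      using L d by (simp add: \<epsilon>_def field_simps)
    finally show ?thesis using radial lip d by linarith
  next
    case 2
    then show ?thesis using radial a by linarith
  next
    case 3
    have "a * (a / 2) * \<epsilon>\<^sup>2 \<le> \<rho> * s * (norm (\<theta> - z))\<^sup>2"
      using 3 a \<open>0 < \<epsilon>\<close> by (intro mult_mono power_mono) auto
    have "(a * \<epsilon> / 2)\<^sup>2 \<le> a * (a / 2) * \<epsilon>\<^sup>2"
      using \<open>0 < \<epsilon>\<close> a(1) by (simp add: power2_eq_square zero_le_mult_iff)
    also have "\<dots> \<le> (\<rho> - s)\<^sup>2 + \<rho> * s * (norm (\<theta> - z))\<^sup>2"
      using \<open>a * (a / 2) * \<epsilon>\<^sup>2 \<le> \<rho> * s * (norm (\<theta> - z))\<^sup>2\<close> zero_le_power2[of "\<rho> - s"] by linarith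
    finally have "(a * \<epsilon> / 2)\<^sup>2 \<le> (norm (\<rho> *\<^sub>R \<theta> - s *\<^sub>R z))\<^sup>2"
      by (simp only: norm_scaleR_diff_sphere_sq[OF unit])
    then have "a * \<epsilon> / 2 \<le> norm (\<rho> *\<^sub>R \<theta> - s *\<^sub>R z)"
      by (rule power2_le_imp_le) simp
    then show ?thesis by (simp add: \<epsilon>_def)
  qed
qed

lemma abs_norm_radial_diff_le:
  fixes \<theta> x x' :: "'a::real_normed_vector"
  assumes "norm \<theta> = 1"
  shows "\<bar>norm (c *\<^sub>R \<theta> - x) - norm (c' *\<^sub>R \<theta> - x')\<bar> \<le> \<bar>c - c'\<bar> + dist x x'"
proof -
  have "\<bar>norm (c *\<^sub>R \<theta> - x) - norm (c' *\<^sub>R \<theta> - x')\<bar> \<le> norm ((c *\<^sub>R \<theta> - x) - (c' *\<^sub>R \<theta> - x'))"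
    by (rule norm_triangle_ineq3)
  also have "(c *\<^sub>R \<theta> - x) - (c' *\<^sub>R \<theta> - x') = (c - c') *\<^sub>R \<theta> - (x - x')"
    by (simp add: algebra_simps)
  also have "norm \<dots> \<le> norm ((c - c') *\<^sub>R \<theta>) + norm (x - x')"
    by (rule norm_triangle_ineq4)
  finally show ?thesis using assms by (simp add: dist_norm)
qed

lemma nonneg_if_abs_le_on_sphere:
  fixes f :: "'a::euclidean_space \<Rightarrow> real"
  assumes "\<forall>\<theta>\<in>sphere 0 1. \<bar>f \<theta>\<bar> \<le> B"
  shows "0 \<le> B"
proof -
  have "sphere (0::'a) 1 \<noteq> {}" by simp
  then show ?thesis using assms by (meson abs_ge_zero all_not_in_conv order_trans)
qed

lemma lipschitz_on_radial_dist:
  fixes c :: "'a::euclidean_space \<Rightarrow> real"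
  assumes lip: "L-lipschitz_on (sphere 0 1) c" and bound: "\<forall>\<theta>\<in>sphere 0 1. \<bar>c \<theta>\<bar> \<le> U"
  shows "(L + U)-lipschitz_on (sphere 0 1) (\<lambda>\<theta>. norm (c \<theta> *\<^sub>R \<theta> - x))"
proof (rule lipschitz_onI)
  show "0 \<le> L + U"
    using lipschitz_on_nonneg[OF lip] nonneg_if_abs_le_on_sphere[OF bound] by simp
  fix \<theta> \<theta>' :: 'a assume \<theta>: "\<theta> \<in> sphere 0 1" "\<theta>' \<in> sphere 0 1"
  have "dist (norm (c \<theta> *\<^sub>R \<theta> - x)) (norm (c \<theta>' *\<^sub>R \<theta>' - x)) \<le> norm (c \<theta> *\<^sub>R \<theta> - c \<theta>' *\<^sub>R \<theta>')"
    using norm_triangle_ineq3[of "c \<theta> *\<^sub>R \<theta> - x" "c \<theta>' *\<^sub>R \<theta>' - x"] by (simp add: dist_real_def)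
  also have "c \<theta> *\<^sub>R \<theta> - c \<theta>' *\<^sub>R \<theta>' = (c \<theta> - c \<theta>') *\<^sub>R \<theta> + c \<theta>' *\<^sub>R (\<theta> - \<theta>')"
    by (simp add: algebra_simps)
  also have "norm \<dots> \<le> \<bar>c \<theta> - c \<theta>'\<bar> + \<bar>c \<theta>'\<bar> * dist \<theta> \<theta>'"
    using norm_triangle_ineq[of "(c \<theta> - c \<theta>') *\<^sub>R \<theta>" "c \<theta>' *\<^sub>R (\<theta> - \<theta>')"] \<theta>
    by (simp add: dist_norm)
  also have "\<dots> \<le> L * dist \<theta> \<theta>' + U * dist \<theta> \<theta>'"
    using lipschitz_onD[OF lip \<theta>] bound \<theta> by (intro add_mono mult_right_mono) (auto simp: dist_real_def)
  finally show "dist (norm (c \<theta> *\<^sub>R \<theta> - x)) (norm (c \<theta>' *\<^sub>R \<theta>' - x)) \<le> (L + U) * dist \<theta> \<theta>'"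
    by (simp add: algebra_simps)
qed

lemma C3_bump_lipschitz:
  fixes \<phi> :: "real \<Rightarrow> real"
  assumes cont: "continuous_on UNIV \<phi>" and supp: "\<forall>t. t \<notin> {-1..1} \<longrightarrow> \<phi> t = 0"
    and C3: "C3_on {-1..1} \<phi>"
  obtains K where "K-lipschitz_on UNIV \<phi>" "\<forall>t. \<bar>\<phi> t\<bar> \<le> 2 * K"
proof -
  obtain \<phi>' \<phi>'' where \<phi>': "\<forall>t\<in>{-1..1}. (\<phi> has_real_derivative \<phi>' t) (at t within {-1..1})"
    and \<phi>'': "\<forall>t\<in>{-1..1}. (\<phi>' has_real_derivative \<phi>'' t) (at t within {-1..1})"
    using C3 unfolding C3_on_def by blast
  have "continuous_on {-1..1} \<phi>'"
    using \<phi>'' by (intro DERIV_continuous_on) auto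
  then obtain K where K: "\<forall>t\<in>{-1..1}. norm (\<phi>' t) \<le> K"
    using compact_imp_bounded[OF compact_continuous_image[OF _ compact_Icc]] by (force simp: bounded_iff)
  have lip_Icc: "K-lipschitz_on {-1..1} \<phi>"
  proof (rule lipschitz_onI)
    show "0 \<le> K" using K[rule_format, of 0] by simp
    show "dist (\<phi> s) (\<phi> t) \<le> K * dist s t" if "s \<in> {-1..1}" "t \<in> {-1..1}" for s t
    proof -
      have "norm (\<phi> s - \<phi> t) \<le> K * norm (s - t)"
        by (rule field_differentiable_bound[of "{-1..1}" \<phi> \<phi>' K]) (use \<phi>' K that in auto)
      then show ?thesis by (simp add: dist_norm)
    qed
  qed
  txt \<open>\<open>\<phi>\<close> factors through the \<open>1\<close>-Lipschitz retraction of \<open>\<real>\<close> onto \<open>[-1, 1]\<close>.\<close>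
  define cl :: "real \<Rightarrow> real" where "cl t = max (-1) (min 1 t)" for t
  have "closed (\<phi> -` {0})"
    using cont by (intro continuous_closed_vimage) (auto simp: continuous_on_eq_continuous_at)
  moreover have "{1<..} \<union> {..<-1} \<subseteq> \<phi> -` {0}"
    using supp by auto
  ultimately have "closure ({1<..} \<union> {..<-1}) \<subseteq> \<phi> -` {0}"
    by (rule closure_minimal[rotated])
  then have ends: "\<phi> 1 = 0" "\<phi> (-1) = 0"
    by auto
  have \<phi>_cl: "\<phi> (cl t) = \<phi> t" for t
    using supp ends by (cases "t < -1"; cases "t > 1") (auto simp: cl_def)
  have "1-lipschitz_on UNIV cl"
    by (auto intro!: lipschitz_onI simp: cl_def dist_real_def)
  then have "(K * 1)-lipschitz_on UNIV (\<lambda>t. \<phi> (cl t))"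
    by (rule lipschitz_on_compose2[OF _ lipschitz_on_subset[OF lip_Icc]]) (auto simp: cl_def)
  then have lip: "K-lipschitz_on UNIV \<phi>"
    by (simp add: \<phi>_cl)
  have "\<bar>\<phi> t\<bar> \<le> 2 * K" for t
  proof -
    have "\<bar>\<phi> t\<bar> = dist (\<phi> (cl t)) (\<phi> 1)"
      using \<phi>_cl ends by (simp add: dist_real_def)
    also have "\<dots> \<le> K * dist (cl t) 1"
      by (rule lipschitz_onD[OF lip_Icc]) (auto simp: cl_def)
    also have "\<dots> \<le> K * 2"
      using lipschitz_on_nonneg[OF lip_Icc] by (intro mult_left_mono) (auto simp: cl_def dist_real_def)
    finally show ?thesis by simp
  qed
  with lip show ?thesis using that by blast
qed

lemma bump_kernel_lipschitz:
  fixes \<phi> :: "real \<Rightarrow> real"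
  assumes "K-lipschitz_on UNIV \<phi>" "0 \<le> C" "0 < \<eta>"
  shows "(C * K / \<eta>\<^sup>2)-lipschitz_on UNIV (\<lambda>t. C * \<phi> (1 - (1 - t) / \<eta>\<^sup>2))"
proof -
  have "(1 - (1 - s) / \<eta>\<^sup>2) - (1 - (1 - t) / \<eta>\<^sup>2) = (s - t) / \<eta>\<^sup>2" for s t
    using assms(3) by (simp add: field_simps)
  then have "(1 / \<eta>\<^sup>2)-lipschitz_on UNIV (\<lambda>t. 1 - (1 - t) / \<eta>\<^sup>2)"
    by (intro lipschitz_onI) (simp_all add: dist_real_def abs_div)
  from lipschitz_on_cmult_real_nonneg[OF lipschitz_on_compose2[OF this lipschitz_on_subset[OF assms(1)]] assms(2)]
  show ?thesis by simp
qed

section \<open>Spherical integrals and the convolution kernel\<close>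

lemma space_surf [simp]: "space (surf::'a::euclidean_space measure) = sphere 0 1"
  by (simp add: surf_def space_scale_measure)

lemma borel_measurable_surf_continuous_on:
  fixes f :: "'a::euclidean_space \<Rightarrow> real"
  assumes "continuous_on (sphere 0 1) f"
  shows "f \<in> borel_measurable surf"
proof -
  have "sets (surf::'a measure) = sets (restrict_space borel (sphere 0 1))"
    by (simp add: surf_def)
  then show ?thesis
    using borel_measurable_continuous_on_restrict[OF assms] measurable_cong_sets by blast
qed

lemma abs_le_normInf:
  fixes f :: "'a::euclidean_space \<Rightarrow> real"
  assumes "continuous_on (sphere 0 1) f" "\<theta> \<in> sphere 0 1"
  shows "\<bar>f \<theta>\<bar> \<le> normInf f"
proof -
  have "compact ((\<lambda>\<theta>. \<bar>f \<theta>\<bar>) ` sphere 0 1)"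
    using assms(1) by (intro compact_continuous_image continuous_intros compact_sphere)
  then show ?thesis
    unfolding normInf_def using assms(2) by (intro cSUP_upper bounded_imp_bdd_above compact_imp_bounded)
qed

lemma normInf_le:
  fixes f :: "'a::euclidean_space \<Rightarrow> real"
  assumes "\<forall>\<theta>\<in>sphere 0 1. \<bar>f \<theta>\<bar> \<le> B"
  shows "normInf f \<le> B"
  unfolding normInf_def using assms by (intro cSUP_least) auto

lemma surf_pos_if_conv_eq_one:
  fixes z :: "'a::euclidean_space"
  assumes "conv f g z = 1"
  shows "0 < measure (surf::'a measure) (sphere 0 1)"
proof (rule ccontr)
  assume "\<not> ?thesis"
  then have "measure (surf::'a measure) (sphere 0 1) = 0"
    using measure_nonneg[of "surf::'a measure" "sphere 0 1"] by linarith
  then show False using assms by (simp add: conv_def)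
qed

lemma conv_scale_kernel: "conv f (\<lambda>t. C * h t) z = C * conv f h z"
  by (simp add: conv_def mult.left_commute)

lemma conv_nonneg:
  assumes "\<forall>\<theta>\<in>sphere 0 1. 0 \<le> f \<theta>" "\<forall>t. 0 \<le> h t"
  shows "0 \<le> conv f h z"
  unfolding conv_def using assms by (auto intro!: divide_nonneg_nonneg integral_nonneg_AE AE_I2)

lemma scaled_bump_kernel:
  fixes \<phi> g :: "real \<Rightarrow> real" and z :: "'a::euclidean_space"
  assumes nonneg: "\<forall>t. 0 \<le> \<phi> t" and "continuous_on UNIV \<phi>" "\<forall>t. t \<notin> {-1..1} \<longrightarrow> \<phi> t = 0"
    and "C3_on {-1..1} \<phi>" and "0 < \<eta>"
    and g: "g = (\<lambda>t. C * \<phi> (1 - (1 - t) / \<eta>\<^sup>2))" and conv_one: "conv (\<lambda>_. 1) g z = 1"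
  obtains G K where "\<forall>t. 0 \<le> g t" "\<forall>t. g t \<le> G" "K-lipschitz_on UNIV g"
proof -
  obtain K where lip: "K-lipschitz_on UNIV \<phi>" and bound: "\<forall>t. \<bar>\<phi> t\<bar> \<le> 2 * K"
    using C3_bump_lipschitz assms(2-4) by blast
  have "1 = C * conv (\<lambda>_. 1) (\<lambda>t. \<phi> (1 - (1 - t) / \<eta>\<^sup>2)) z"
    using conv_one by (simp add: g conv_scale_kernel)
  moreover have "0 \<le> conv (\<lambda>_. 1) (\<lambda>t. \<phi> (1 - (1 - t) / \<eta>\<^sup>2)) z"
    using nonneg by (intro conv_nonneg) auto
  ultimately have "0 \<le> C"
    by (metis mult_nonpos_nonneg not_le zero_less_one order_less_imp_le linorder_not_less)
  have "\<forall>t. 0 \<le> g t" "\<forall>t. g t \<le> C * (2 * K)"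
    using \<open>0 \<le> C\<close> nonneg bound by (auto simp: g intro: mult_left_mono dest: abs_le_D1)
  moreover have "(C * K / \<eta>\<^sup>2)-lipschitz_on UNIV g"
    unfolding g by (rule bump_kernel_lipschitz[OF lip \<open>0 \<le> C\<close> \<open>0 < \<eta>\<close>])
  ultimately show ?thesis
    using that by blast
qed

context
  assumes surf_pos: "0 < measure (surf::'a::euclidean_space measure) (sphere 0 1)"
begin

lemma finite_measure_surf: "finite_measure (surf::'a measure)"
  using surf_pos by (intro finite_measureI) (auto simp: measure_def)

lemma integrable_surf_continuous_on:
  fixes f :: "'a \<Rightarrow> real"
  assumes "continuous_on (sphere 0 1) f"
  shows "integrable surf f"
proof -
  obtain B where "\<forall>\<theta>\<in>sphere 0 1. norm (f \<theta>) \<le> B"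
    using compact_imp_bounded[OF compact_continuous_image[OF assms compact_sphere]]
    by (auto simp: bounded_iff)
  then show ?thesis
    by (intro finite_measure.integrable_const_bound[OF finite_measure_surf, where B = B]
        borel_measurable_surf_continuous_on assms AE_I2) auto
qed

lemma abs_integral_surf_le:
  fixes f :: "'a \<Rightarrow> real"
  assumes bound: "\<forall>\<theta>\<in>sphere 0 1. \<bar>f \<theta>\<bar> \<le> B"
  shows "\<bar>integral\<^sup>L surf f\<bar> \<le> B * measure (surf::'a measure) (sphere 0 1)"
proof (cases "integrable surf f")
  case True
  have "\<bar>integral\<^sup>L surf f\<bar> \<le> integral\<^sup>L surf (\<lambda>\<theta>. \<bar>f \<theta>\<bar>)"
    by (rule integral_abs_bound)
  also have "\<dots> \<le> integral\<^sup>L (surf::'a measure) (\<lambda>\<theta>. B)"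
    using True bound finite_measure.integrable_const[OF finite_measure_surf] by (intro integral_mono) auto
  finally show ?thesis by (simp add: mult.commute)
next
  case False
  have "0 \<le> B" using bound by (rule nonneg_if_abs_le_on_sphere)
  then show ?thesis using False surf_pos by (simp add: not_integrable_integral_eq)
qed

lemma integral_surf_ge:
  fixes f :: "'a \<Rightarrow> real"
  assumes "continuous_on (sphere 0 1) f" "\<forall>\<theta>\<in>sphere 0 1. m \<le> f \<theta>"
  shows "m * measure (surf::'a measure) (sphere 0 1) \<le> integral\<^sup>L surf f"
  using integral_mono[OF finite_measure.integrable_const[OF finite_measure_surf]
      integrable_surf_continuous_on[OF assms(1)], of m] assms(2)
  by (simp add: mult.commute)

lemma integral_surf_le:
  fixes f :: "'a \<Rightarrow> real"
  assumes "continuous_on (sphere 0 1) f" "\<forall>\<theta>\<in>sphere 0 1. f \<theta> \<le> M"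
  shows "integral\<^sup>L surf f \<le> M * measure (surf::'a measure) (sphere 0 1)"
  using integral_mono[OF integrable_surf_continuous_on[OF assms(1)]
      finite_measure.integrable_const[OF finite_measure_surf], of M] assms(2)
  by (simp add: mult.commute)

text \<open>Cauchy--Schwarz against the constant \<open>1\<close>, read off from \<open>\<integral> (|r| - A / \<omega>)\<^sup>2 \<ge> 0\<close>.\<close>
lemma integral_surf_abs_le_norm2:
  fixes r :: "'a \<Rightarrow> real"
  assumes "continuous_on (sphere 0 1) r"
  shows "integral\<^sup>L surf (\<lambda>\<theta>. \<bar>r \<theta>\<bar>) \<le> sqrt (measure (surf::'a measure) (sphere 0 1)) * norm2 r"
proof -
  define \<omega> where "\<omega> = measure (surf::'a measure) (sphere 0 1)"
  define A where "A = integral\<^sup>L surf (\<lambda>\<theta>. \<bar>r \<theta>\<bar>)"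
  define Q where "Q = integral\<^sup>L surf (\<lambda>\<theta>. (r \<theta>)\<^sup>2)"
  have \<omega>: "0 < \<omega>" using surf_pos by (simp add: \<omega>_def)
  have "integrable surf (\<lambda>\<theta>. \<bar>r \<theta>\<bar>)" "integrable surf (\<lambda>\<theta>. (r \<theta>)\<^sup>2)"
    using assms by (auto intro!: integrable_surf_continuous_on continuous_intros)
  moreover have "integrable (surf::'a measure) (\<lambda>\<theta>. (A / \<omega>)\<^sup>2)"
    by (rule finite_measure.integrable_const[OF finite_measure_surf])
  moreover have "(\<lambda>\<theta>. (\<bar>r \<theta>\<bar> - A / \<omega>)\<^sup>2) = (\<lambda>\<theta>. ((r \<theta>)\<^sup>2 - 2 * (A / \<omega>) * \<bar>r \<theta>\<bar>) + (A / \<omega>)\<^sup>2)"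
    by (auto simp: power2_eq_square algebra_simps)
  ultimately have "integral\<^sup>L surf (\<lambda>\<theta>. (\<bar>r \<theta>\<bar> - A / \<omega>)\<^sup>2) = Q - 2 * (A / \<omega>) * A + (A / \<omega>)\<^sup>2 * \<omega>"
    by (simp add: Q_def A_def \<omega>_def)
  also have "\<dots> = Q - A\<^sup>2 / \<omega>"
    using \<omega> by (simp add: power2_eq_square field_simps)
  finally have "0 \<le> Q - A\<^sup>2 / \<omega>"
    by (metis integral_nonneg_AE zero_le_power2 AE_I2)
  then have "A\<^sup>2 \<le> \<omega> * Q"
    using \<omega> by (simp add: field_simps)
  then have "A \<le> sqrt (\<omega> * Q)"
    by (simp add: real_le_rsqrt)
  then show ?thesis by (simp add: A_def \<omega>_def Q_def norm2_def real_sqrt_mult)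
qed

lemma norm2_le:
  fixes f :: "'a \<Rightarrow> real"
  assumes bound: "\<forall>\<theta>\<in>sphere 0 1. \<bar>f \<theta>\<bar> \<le> B"
  shows "norm2 f \<le> B * sqrt (measure (surf::'a measure) (sphere 0 1))"
proof -
  have "0 \<le> B" using bound by (rule nonneg_if_abs_le_on_sphere)
  have "\<forall>\<theta>\<in>sphere 0 1. \<bar>(f \<theta>)\<^sup>2\<bar> \<le> B\<^sup>2"
    using bound by (auto simp: abs_le_square_iff[symmetric] intro: power_mono)
  then have "integral\<^sup>L surf (\<lambda>\<theta>. (f \<theta>)\<^sup>2) \<le> B\<^sup>2 * measure (surf::'a measure) (sphere 0 1)"
    using abs_integral_surf_le by fastforce
  then have "norm2 f \<le> sqrt (B\<^sup>2 * measure (surf::'a measure) (sphere 0 1))"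
    unfolding norm2_def by (rule real_sqrt_le_mono)
  then show ?thesis using \<open>0 \<le> B\<close> by (simp add: real_sqrt_mult)
qed

lemma abs_integral_surf_mult_le_norm2:
  fixes r k :: "'a \<Rightarrow> real"
  assumes "continuous_on (sphere 0 1) r" "continuous_on (sphere 0 1) k"
    and bound: "\<forall>\<theta>\<in>sphere 0 1. \<bar>k \<theta>\<bar> \<le> B"
  shows "\<bar>integral\<^sup>L surf (\<lambda>\<theta>. r \<theta> * k \<theta>)\<bar> / measure (surf::'a measure) (sphere 0 1)
           \<le> B * norm2 r / sqrt (measure (surf::'a measure) (sphere 0 1))"
proof -
  define \<omega> where "\<omega> = measure (surf::'a measure) (sphere 0 1)"
  have \<omega>: "0 < \<omega>" using surf_pos by (simp add: \<omega>_def)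
  have "0 \<le> B" using bound by (rule nonneg_if_abs_le_on_sphere)
  have "\<bar>integral\<^sup>L surf (\<lambda>\<theta>. r \<theta> * k \<theta>)\<bar> \<le> integral\<^sup>L surf (\<lambda>\<theta>. \<bar>r \<theta> * k \<theta>\<bar>)"
    by (rule integral_abs_bound)
  also have "\<dots> \<le> integral\<^sup>L surf (\<lambda>\<theta>. B * \<bar>r \<theta>\<bar>)"
    using assms bound by (intro integral_mono integrable_surf_continuous_on continuous_intros)
      (auto simp: abs_mult mult.commute intro: mult_right_mono)
  also have "\<dots> \<le> B * (sqrt \<omega> * norm2 r)"
    using integral_surf_abs_le_norm2[OF assms(1)] \<open>0 \<le> B\<close> by (simp add: \<omega>_def mult_left_mono)
  finally have "\<bar>integral\<^sup>L surf (\<lambda>\<theta>. r \<theta> * k \<theta>)\<bar> / \<omega> \<le> B * (sqrt \<omega> * norm2 r) / \<omega>"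
    using \<omega> by (simp add: divide_right_mono)
  also have "\<dots> = B * norm2 r / sqrt \<omega>"
    using \<omega> by (simp add: field_simps real_sqrt_mult[symmetric])
  finally show ?thesis by (simp add: \<omega>_def)
qed

lemma Aset_normInf_subset_radial_class:
  assumes "0 < a"
  shows "Aset normInf a \<subseteq> (radial_class a (sqrt (measure (surf::'a measure) (sphere 0 1)) / a) :: ('a \<Rightarrow> real) set)"
proof
  fix r :: "'a \<Rightarrow> real" assume "r \<in> Aset normInf a"
  then have r: "continuous_on (sphere 0 1) r" "\<forall>\<theta>\<in>sphere 0 1. a \<le> r \<theta>" "normInf r \<le> 1 / a"
    by (auto simp: Aset_def Cplus_def)
  then have "\<forall>\<theta>\<in>sphere 0 1. \<bar>r \<theta>\<bar> \<le> 1 / a"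
    using abs_le_normInf[OF r(1)] by fastforce
  then have "norm2 r \<le> sqrt (measure (surf::'a measure) (sphere 0 1)) / a"
    using norm2_le by fastforce
  then show "r \<in> radial_class a (sqrt (measure (surf::'a measure) (sphere 0 1)) / a)"
    using r by (simp add: radial_class_def)
qed

lemma normalized_density_bounds:
  fixes h :: "'a \<Rightarrow> real"
  assumes "continuous_on (sphere 0 1) h" "0 < m" "\<forall>\<theta>\<in>sphere 0 1. m \<le> h \<theta> \<and> h \<theta> \<le> M"
    and "\<theta> \<in> sphere 0 1"
  shows "m / (M * measure (surf::'a measure) (sphere 0 1)) \<le> h \<theta> / integral\<^sup>L surf h
    \<and> h \<theta> / integral\<^sup>L surf h \<le> M / (m * measure (surf::'a measure) (sphere 0 1))"
proof -
  define D where "D = integral\<^sup>L surf h"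
  have h: "m \<le> h \<theta>" "h \<theta> \<le> M" using assms(3,4) by auto
  have D: "m * measure (surf::'a measure) (sphere 0 1) \<le> D" "D \<le> M * measure (surf::'a measure) (sphere 0 1)"
    using integral_surf_ge[OF assms(1)] integral_surf_le[OF assms(1)] assms(3) by (auto simp: D_def)
  moreover have \<omega>: "0 < m * measure (surf::'a measure) (sphere 0 1)" using assms(2) surf_pos by simp
  ultimately have "0 < D" "0 \<le> M" using h assms(2) by linarith+
  then show ?thesis
    unfolding D_def[symmetric] using h D assms(2) \<omega> by (auto intro!: frac_le)
qed

lemma normalized_density_lipschitz:
  fixes h :: "'a \<Rightarrow> real"
  assumes "continuous_on (sphere 0 1) h" "0 < m" "\<forall>\<theta>\<in>sphere 0 1. m \<le> h \<theta>"
    and lip: "L-lipschitz_on (sphere 0 1) h"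
  shows "(L / (m * measure (surf::'a measure) (sphere 0 1)))-lipschitz_on (sphere 0 1)
           (\<lambda>\<theta>. h \<theta> / integral\<^sup>L surf h)"
proof -
  have "0 < m * measure (surf::'a measure) (sphere 0 1)"
    using assms(2) surf_pos by simp
  moreover have "m * measure (surf::'a measure) (sphere 0 1) \<le> integral\<^sup>L surf h"
    using integral_surf_ge[OF assms(1,3)] .
  ultimately have "\<bar>1 / integral\<^sup>L surf h\<bar> \<le> 1 / (m * measure (surf::'a measure) (sphere 0 1))"
    by (simp add: frac_le)
  from lipschitz_on_cmult_real_upper[OF lip this] show ?thesis
    by simp
qed

lemma normalized_density_diff:
  fixes h h' :: "'a \<Rightarrow> real"
  assumes "continuous_on (sphere 0 1) h" "continuous_on (sphere 0 1) h'" "0 < m"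
    and "\<forall>\<theta>\<in>sphere 0 1. m \<le> h \<theta> \<and> h \<theta> \<le> M" "\<forall>\<theta>\<in>sphere 0 1. m \<le> h' \<theta> \<and> h' \<theta> \<le> M"
    and diff: "\<forall>\<theta>\<in>sphere 0 1. \<bar>h \<theta> - h' \<theta>\<bar> \<le> e" and "\<theta> \<in> sphere 0 1"
  shows "\<bar>h \<theta> / integral\<^sup>L surf h - h' \<theta> / integral\<^sup>L surf h'\<bar>
           \<le> (1 / (m * measure (surf::'a measure) (sphere 0 1)) + M / (m\<^sup>2 * measure (surf::'a measure) (sphere 0 1))) * e"
proof -
  define \<omega> where "\<omega> = measure (surf::'a measure) (sphere 0 1)"
  have \<omega>: "0 < \<omega>" using surf_pos by (simp add: \<omega>_def)
  have "integral\<^sup>L surf h - integral\<^sup>L surf h' = integral\<^sup>L surf (\<lambda>\<theta>. h \<theta> - h' \<theta>)"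
    using assms(1,2) by (simp add: integrable_surf_continuous_on)
  then have "\<bar>integral\<^sup>L surf h - integral\<^sup>L surf h'\<bar> \<le> e * \<omega>"
    using abs_integral_surf_le[OF diff] by (simp add: \<omega>_def)
  then have "\<bar>h \<theta> / integral\<^sup>L surf h - h' \<theta> / integral\<^sup>L surf h'\<bar> \<le> e / (m * \<omega>) + M * (e * \<omega>) / (m * \<omega>)\<^sup>2"
    using assms(3-) \<omega> integral_surf_ge[OF assms(1)] integral_surf_ge[OF assms(2)]
    by (intro abs_divide_diff_le) (auto simp: \<omega>_def dest: bspec[of _ _ \<theta>] intro: order_trans[OF less_imp_le])
  also have "\<dots> = (1 / (m * \<omega>) + M / (m\<^sup>2 * \<omega>)) * e"
    using \<omega> assms(3) by (simp add: field_simps power2_eq_square)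
  finally show ?thesis by (simp add: \<omega>_def)
qed


section \<open>Convolution with a bounded Lipschitz kernel\<close>

context
  fixes g :: "real \<Rightarrow> real" and G K :: real
  assumes kernel_nonneg: "\<forall>t. 0 \<le> g t" and kernel_le: "\<forall>t. g t \<le> G"
    and kernel_lipschitz: "K-lipschitz_on UNIV g"
begin

lemma kernel_bound_nonneg: "0 \<le> G"
  using kernel_nonneg kernel_le by (meson order_trans)

lemma continuous_on_conv_integrand:
  fixes r :: "'a \<Rightarrow> real"
  assumes "continuous_on (sphere 0 1) r"
  shows "continuous_on (sphere 0 1) (\<lambda>\<theta>. r \<theta> * g (inner z \<theta>))"
proof -
  have "continuous_on (sphere 0 1) (\<lambda>\<theta>. g (inner z \<theta>))"
    by (rule continuous_on_compose2[OF lipschitz_on_continuous_on[OF kernel_lipschitz]])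
      (auto intro: continuous_intros)
  then show ?thesis using assms by (intro continuous_intros)
qed

lemma conv_diff:
  fixes r r' :: "'a \<Rightarrow> real"
  assumes "continuous_on (sphere 0 1) r" "continuous_on (sphere 0 1) r'"
  shows "conv r g z - conv r' g z = conv (\<lambda>\<theta>. r \<theta> - r' \<theta>) g z"
  using integrable_surf_continuous_on[OF continuous_on_conv_integrand[OF assms(1)]]
    integrable_surf_continuous_on[OF continuous_on_conv_integrand[OF assms(2)]]
  by (simp add: conv_def diff_divide_distrib[symmetric] left_diff_distrib)

lemma abs_conv_le_norm2:
  fixes r :: "'a \<Rightarrow> real"
  assumes "continuous_on (sphere 0 1) r"
  shows "\<bar>conv r g z\<bar> \<le> G * norm2 r / sqrt (measure (surf::'a measure) (sphere 0 1))"
  using abs_integral_surf_mult_le_norm2[OF assms, of "\<lambda>\<theta>. g (inner z \<theta>)" G]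
    continuous_on_conv_integrand[of "\<lambda>_. 1"] kernel_nonneg kernel_le
  by (simp add: conv_def)

lemma abs_conv_le:
  fixes r :: "'a \<Rightarrow> real"
  assumes "\<forall>\<theta>\<in>sphere 0 1. \<bar>r \<theta>\<bar> \<le> B"
  shows "\<bar>conv r g z\<bar> \<le> G * B"
proof -
  have "\<forall>\<theta>\<in>sphere 0 1. \<bar>r \<theta> * g (inner z \<theta>)\<bar> \<le> G * B"
    using assms kernel_nonneg kernel_le nonneg_if_abs_le_on_sphere[OF assms]
    by (auto simp: abs_mult mult.commute intro!: mult_mono)
  from abs_integral_surf_le[OF this] show ?thesis
    using surf_pos by (simp add: conv_def pos_divide_le_eq)
qed

lemma lipschitz_on_conv:
  fixes r :: "'a \<Rightarrow> real"
  assumes "continuous_on (sphere 0 1) r"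
  shows "(K * norm2 r / sqrt (measure (surf::'a measure) (sphere 0 1)))-lipschitz_on UNIV (conv r g)"
proof (rule lipschitz_onI)
  show "0 \<le> K * norm2 r / sqrt (measure (surf::'a measure) (sphere 0 1))"
    using lipschitz_on_nonneg[OF kernel_lipschitz] by (simp add: norm2_def)
  fix z z' :: 'a
  have bound: "\<forall>\<theta>\<in>sphere 0 1. \<bar>g (inner z \<theta>) - g (inner z' \<theta>)\<bar> \<le> K * dist z z'"
  proof
    fix \<theta> :: 'a assume "\<theta> \<in> sphere 0 1"
    then have "\<bar>inner z \<theta> - inner z' \<theta>\<bar> \<le> dist z z'"
      using Cauchy_Schwarz_ineq2[of "z - z'" \<theta>] by (simp add: inner_diff_left dist_norm)
    then show "\<bar>g (inner z \<theta>) - g (inner z' \<theta>)\<bar> \<le> K * dist z z'"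
      using lipschitz_onD[OF kernel_lipschitz, of "inner z \<theta>" "inner z' \<theta>"]
        lipschitz_on_nonneg[OF kernel_lipschitz]
      by (simp add: dist_real_def) (meson mult_left_mono order_trans)
  qed
  have "continuous_on (sphere 0 1) (\<lambda>\<theta>. g (inner z \<theta>) - g (inner z' \<theta>))"
    using continuous_on_conv_integrand[of "\<lambda>_. 1"] by (intro continuous_intros) auto
  from abs_integral_surf_mult_le_norm2[OF assms this bound] have "\<bar>integral\<^sup>L surf (\<lambda>\<theta>. r \<theta> * (g (inner z \<theta>) - g (inner z' \<theta>)))\<bar>
      / measure (surf::'a measure) (sphere 0 1)
      \<le> K * dist z z' * norm2 r / sqrt (measure (surf::'a measure) (sphere 0 1))" .
  moreover have "conv r g z - conv r g z' = integral\<^sup>L surf (\<lambda>\<theta>. r \<theta> * (g (inner z \<theta>) - g (inner z' \<theta>)))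
      / measure (surf::'a measure) (sphere 0 1)"
    using integrable_surf_continuous_on[OF continuous_on_conv_integrand[OF assms]]
    by (simp add: conv_def diff_divide_distrib[symmetric] right_diff_distrib)
  ultimately show "dist (conv r g z) (conv r g z') \<le> K * norm2 r / sqrt (measure (surf::'a measure) (sphere 0 1)) * dist z z'"
    by (simp add: dist_real_def mult_ac)
qed

lemma conv_mono:
  fixes r r' :: "'a \<Rightarrow> real"
  assumes "continuous_on (sphere 0 1) r" "continuous_on (sphere 0 1) r'"
    and "\<forall>\<theta>\<in>sphere 0 1. r' \<theta> \<le> r \<theta>"
  shows "conv r' g z \<le> conv r g z"
  using assms kernel_nonneg surf_pos
  by (auto simp: conv_def intro!: divide_right_mono integral_mono integrable_surf_continuous_on
      continuous_on_conv_integrand mult_right_mono)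

lemma conv_ge_const:
  fixes r :: "'a \<Rightarrow> real"
  assumes "conv (\<lambda>_. 1) g z = 1" "continuous_on (sphere 0 1) r" "\<forall>\<theta>\<in>sphere 0 1. c \<le> r \<theta>"
  shows "c \<le> conv r g z"
proof -
  have "conv (\<lambda>_. c) g z = c * conv (\<lambda>_. 1) g z"
    by (simp add: conv_def)
  moreover have "conv (\<lambda>_. c) g z \<le> conv r g z"
    using assms(2,3) by (intro conv_mono) auto
  ultimately show ?thesis using assms(1) by simp
qed

section \<open>Estimates on admissible pairs\<close>

context
  fixes \<alpha> :: "real \<times> 'a \<Rightarrow> real" and w :: "real \<Rightarrow> real" and a N :: real
  assumes conv_one: "\<forall>z\<in>sphere (0::'a) 1. conv (\<lambda>_. 1) g z = 1"
    and a_pos: "0 < a" and N_nonneg: "0 \<le> N"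
    and alpha_lip: "locally_lipschitz_on ({0<..} \<times> sphere 0 1) \<alpha>"
    and alpha_range: "\<forall>l>0. \<forall>z\<in>sphere 0 1. 0 \<le> \<alpha> (l, z) \<and> \<alpha> (l, z) < l"
    and w_lip: "locally_lipschitz_on {0<..} w"
    and w_pos: "\<forall>t>0. 0 < w t"
begin

lemma conv_radial_class_bounds:
  fixes r :: "'a \<Rightarrow> real"
  assumes "r \<in> radial_class a N" "\<theta> \<in> sphere 0 1"
  shows "a \<le> conv r g \<theta>" "conv r g \<theta> \<le> G * N / sqrt (measure (surf::'a measure) (sphere 0 1))"
proof -
  have r: "continuous_on (sphere 0 1) r" "\<forall>\<theta>\<in>sphere 0 1. a \<le> r \<theta>" "norm2 r \<le> N"
    using assms(1) by (auto simp: radial_class_def)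
  show "a \<le> conv r g \<theta>"
    using conv_ge_const[OF _ r(1,2)] conv_one assms(2) by blast
  have "G * norm2 r / sqrt (measure (surf::'a measure) (sphere 0 1))
      \<le> G * N / sqrt (measure (surf::'a measure) (sphere 0 1))"
    using r(3) kernel_bound_nonneg by (intro divide_right_mono mult_left_mono) auto
  then show "conv r g \<theta> \<le> G * N / sqrt (measure (surf::'a measure) (sphere 0 1))"
    using abs_conv_le_norm2[OF r(1), of \<theta>] by linarith
qed

lemma lipschitz_on_conv_radial_class:
  fixes r :: "'a \<Rightarrow> real"
  assumes "r \<in> radial_class a N"
  shows "(K * N / sqrt (measure (surf::'a measure) (sphere 0 1)))-lipschitz_on UNIV (conv r g)"
proof -
  have "continuous_on (sphere 0 1) r" "norm2 r \<le> N"
    using assms by (auto simp: radial_class_def)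
  then show ?thesis
    using lipschitz_on_nonneg[OF kernel_lipschitz]
    by (intro lipschitz_on_mono[OF lipschitz_on_conv] divide_right_mono mult_left_mono) auto
qed

lemma alpha_gap:
  obtains d where "0 < d" "\<And>l z. l \<in> {a..U} \<Longrightarrow> z \<in> sphere 0 1 \<Longrightarrow> \<alpha> (l, z) + d \<le> l"
proof -
  have "{a..U} \<times> sphere 0 1 \<subseteq> {0<..} \<times> sphere (0::'a) 1"
    using a_pos by auto
  then have cont: "continuous_on ({a..U} \<times> sphere (0::'a) 1) (\<lambda>p. fst p - \<alpha> p)"
    using continuous_on_subset[OF locally_lipschitz_on_imp_continuous_on[OF alpha_lip]]
    by (intro continuous_intros) auto
  have pos: "\<forall>p\<in>{a..U} \<times> sphere (0::'a) 1. 0 < fst p - \<alpha> p"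
  proof
    fix p assume "p \<in> {a..U} \<times> sphere (0::'a) 1"
    then have "0 < fst p" "snd p \<in> sphere 0 1"
      using a_pos by auto
    then show "0 < fst p - \<alpha> p"
      using alpha_range by (metis prod.collapse diff_gt_0_iff_gt)
  qed
  obtain d where d: "0 < d" "\<forall>p\<in>{a..U} \<times> sphere (0::'a) 1. d \<le> fst p - \<alpha> p"
    by (rule compact_continuous_pos_imp_bounded_below[OF compact_Times[OF compact_Icc compact_sphere] cont pos])
  have "\<alpha> (l, z) + d \<le> l" if "l \<in> {a..U}" "z \<in> sphere 0 1" for l z
    using bspec[OF d(2), of "(l, z)"] that by simp
  with d(1) show ?thesis
    by (rule that)
qed

lemma boundary_dist_bounds:
  obtains \<delta> where "0 < \<delta>"
    and "\<And>r x \<theta>. (r, x) \<in> admissible_pairs g \<alpha> a N \<Longrightarrow> \<theta> \<in> sphere 0 1 \<Longrightarrow>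
           \<delta> \<le> boundary_dist g r x \<theta>
         \<and> boundary_dist g r x \<theta> \<le> 2 * (G * N / sqrt (measure (surf::'a measure) (sphere 0 1)))"
proof -
  define U where "U = G * N / sqrt (measure (surf::'a measure) (sphere 0 1))"
  define L where "L = K * N / sqrt (measure (surf::'a measure) (sphere 0 1))"
  have "0 \<le> L"
    using lipschitz_on_nonneg[OF kernel_lipschitz] N_nonneg by (simp add: L_def)
  obtain d where d: "0 < d" "\<And>l z. l \<in> {a..U} \<Longrightarrow> z \<in> sphere 0 1 \<Longrightarrow> \<alpha> (l, z) + d \<le> l"
    by (rule alpha_gap[of U]) (rule that)
  define \<delta> where "\<delta> = min (d / 2) (min (a / 2) (a * d / (4 * (L + 1))))"
  show ?thesis
  proof (rule that)
    show "0 < \<delta>"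
      using d a_pos \<open>0 \<le> L\<close> by (simp add: \<delta>_def)
    fix r x \<theta> assume "(r, x) \<in> admissible_pairs g \<alpha> a N" and \<theta>: "\<theta> \<in> sphere (0::'a) 1"
    then obtain r' z where r: "r \<in> radial_class a N" and r': "r' \<in> radial_class a N"
      and le: "\<forall>\<theta>\<in>sphere 0 1. r' \<theta> \<le> r \<theta>" and z: "z \<in> sphere 0 1"
      and x: "x = \<alpha> (conv r' g z, z) *\<^sub>R z"
      unfolding admissible_pairs_def by blast
    define l where "l = conv r' g z"
    have l: "a \<le> l" "l \<le> U"
      using conv_radial_class_bounds[OF r' z] by (simp_all add: l_def U_def)
    have \<alpha>: "0 \<le> \<alpha> (l, z)" "\<alpha> (l, z) < l"
      using alpha_range a_pos l z by auto
    have "l \<le> conv r g z"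
      using r r' le unfolding l_def by (intro conv_mono) (auto simp: radial_class_def)
    have "\<delta> \<le> norm (conv r g \<theta> *\<^sub>R \<theta> - \<alpha> (l, z) *\<^sub>R z)"
      unfolding \<delta>_def
    proof (rule norm_scaleR_diff_sphere_ge)
      show "\<bar>conv r g \<theta> - conv r g z\<bar> \<le> L * norm (\<theta> - z)"
        using lipschitz_onD[OF lipschitz_on_conv_radial_class[OF r], of \<theta> z]
        by (simp add: L_def dist_real_def dist_norm)
      show "\<alpha> (l, z) + d \<le> conv r g z"
        using d(2)[of l z] l z \<open>l \<le> conv r g z\<close> by simp
    qed (use \<theta> z a_pos conv_radial_class_bounds(1)[OF r \<theta>] \<alpha>(1) d(1) \<open>0 \<le> L\<close> in simp_all)
    moreover have "norm (conv r g \<theta> *\<^sub>R \<theta> - \<alpha> (l, z) *\<^sub>R z) \<le> conv r g \<theta> + \<alpha> (l, z)"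
      using norm_triangle_ineq4[of "conv r g \<theta> *\<^sub>R \<theta>" "\<alpha> (l, z) *\<^sub>R z"] \<theta> z \<alpha>(1)
        conv_radial_class_bounds(1)[OF r \<theta>] a_pos by simp
    ultimately show "\<delta> \<le> boundary_dist g r x \<theta>
      \<and> boundary_dist g r x \<theta> \<le> 2 * (G * N / sqrt (measure (surf::'a measure) (sphere 0 1)))"
      using conv_radial_class_bounds(2)[OF r \<theta>] \<alpha>(2) l
      by (simp add: boundary_dist_def x l_def U_def)
  qed
qed

lemma weight_estimates:
  obtains m M L where "0 < m" "m \<le> M" "0 \<le> L"
    and "\<And>r x \<theta>. (r, x) \<in> admissible_pairs g \<alpha> a N \<Longrightarrow> \<theta> \<in> sphere 0 1 \<Longrightarrow>
           m \<le> w (boundary_dist g r x \<theta>) \<and> w (boundary_dist g r x \<theta>) \<le> M"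
    and "\<And>r x. (r, x) \<in> admissible_pairs g \<alpha> a N \<Longrightarrow>
           L-lipschitz_on (sphere 0 1) (\<lambda>\<theta>. w (boundary_dist g r x \<theta>))"
    and "\<And>r x r' x' \<theta>. (r, x) \<in> admissible_pairs g \<alpha> a N \<Longrightarrow> (r', x') \<in> admissible_pairs g \<alpha> a N \<Longrightarrow>
           \<theta> \<in> sphere 0 1 \<Longrightarrow> \<bar>w (boundary_dist g r x \<theta>) - w (boundary_dist g r' x' \<theta>)\<bar>
             \<le> L * (\<bar>conv r g \<theta> - conv r' g \<theta>\<bar> + dist x x')"
proof -
  define U where "U = G * N / sqrt (measure (surf::'a measure) (sphere 0 1))"
  define Lc where "Lc = K * N / sqrt (measure (surf::'a measure) (sphere 0 1))"
  obtain \<delta> where \<delta>: "0 < \<delta>"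
    and dist_in: "\<And>r x \<theta>. (r, x) \<in> admissible_pairs g \<alpha> a N \<Longrightarrow> \<theta> \<in> sphere 0 1 \<Longrightarrow>
                    boundary_dist g r x \<theta> \<in> {\<delta>..2 * U}"
    using boundary_dist_bounds unfolding U_def by (metis atLeastAtMost_iff)
  obtain m M Lw where m: "0 < m" and w_bounds: "\<forall>t\<in>{\<delta>..2 * U}. m \<le> w t \<and> w t \<le> M"
    and Lw: "Lw-lipschitz_on {\<delta>..2 * U} w"
    by (rule locally_lipschitz_pos_bounds_on_Icc[OF w_lip w_pos \<delta>])
  have "0 \<le> Lw" "0 \<le> Lc" "0 \<le> U"
    using lipschitz_on_nonneg[OF Lw] lipschitz_on_nonneg[OF kernel_lipschitz] kernel_bound_nonneg N_nonneg
    by (simp_all add: Lc_def U_def)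
  have bounds: "m \<le> w (boundary_dist g r x \<theta>) \<and> w (boundary_dist g r x \<theta>) \<le> max m M"
    if "(r, x) \<in> admissible_pairs g \<alpha> a N" "\<theta> \<in> sphere 0 1" for r x \<theta>
    using w_bounds dist_in[OF that] by fastforce
  have lip: "(Lw * (Lc + U + 1))-lipschitz_on (sphere 0 1) (\<lambda>\<theta>. w (boundary_dist g r x \<theta>))"
    if rx: "(r, x) \<in> admissible_pairs g \<alpha> a N" for r x
  proof -
    have r: "r \<in> radial_class a N"
      using rx by (simp add: admissible_pairs_def)
    have "\<forall>\<theta>\<in>sphere 0 1. \<bar>conv r g \<theta>\<bar> \<le> U"
      using conv_radial_class_bounds[OF r] a_pos by (force simp: U_def)
    then have "(Lc + U)-lipschitz_on (sphere 0 1) (boundary_dist g r x)"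
      using lipschitz_on_radial_dist lipschitz_on_subset[OF lipschitz_on_conv_radial_class[OF r]]
      unfolding boundary_dist_def Lc_def by blast
    moreover have "Lw-lipschitz_on (boundary_dist g r x ` sphere 0 1) w"
      using lipschitz_on_subset[OF Lw] dist_in[OF rx] by blast
    ultimately have "(Lw * (Lc + U))-lipschitz_on (sphere 0 1) (\<lambda>\<theta>. w (boundary_dist g r x \<theta>))"
      by (rule lipschitz_on_compose2)
    then show ?thesis
      using \<open>0 \<le> Lw\<close> by (elim lipschitz_on_mono) (auto intro: mult_left_mono)
  qed
  have diff: "\<bar>w (boundary_dist g r x \<theta>) - w (boundary_dist g r' x' \<theta>)\<bar>
      \<le> Lw * (Lc + U + 1) * (\<bar>conv r g \<theta> - conv r' g \<theta>\<bar> + dist x x')"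
    if rx: "(r, x) \<in> admissible_pairs g \<alpha> a N" and rx': "(r', x') \<in> admissible_pairs g \<alpha> a N"
      and \<theta>: "\<theta> \<in> sphere 0 1" for r x r' x' \<theta>
  proof -
    have "\<bar>w (boundary_dist g r x \<theta>) - w (boundary_dist g r' x' \<theta>)\<bar>
        \<le> Lw * \<bar>boundary_dist g r x \<theta> - boundary_dist g r' x' \<theta>\<bar>"
      using lipschitz_onD[OF Lw dist_in[OF rx \<theta>] dist_in[OF rx' \<theta>]] by (simp add: dist_real_def)
    also have "\<dots> \<le> Lw * (\<bar>conv r g \<theta> - conv r' g \<theta>\<bar> + dist x x')"
      using abs_norm_radial_diff_le[of \<theta>] \<theta> \<open>0 \<le> Lw\<close>
      by (intro mult_left_mono) (auto simp: boundary_dist_def)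
    also have "\<dots> \<le> Lw * (Lc + U + 1) * (\<bar>conv r g \<theta> - conv r' g \<theta>\<bar> + dist x x')"
      using \<open>0 \<le> Lw\<close> \<open>0 \<le> Lc\<close> \<open>0 \<le> U\<close> by (intro mult_right_mono) (auto simp: mult_le_cancel_left1)
    finally show ?thesis .
  qed
  show ?thesis
    using that[OF m(1) _ _ bounds lip diff] \<open>0 \<le> Lw\<close> \<open>0 \<le> Lc\<close> \<open>0 \<le> U\<close> by simp
qed

lemma Fw_bounds:
  assumes "P \<subseteq> admissible_pairs g \<alpha> a N"
  shows "\<exists>m M. 0 < m \<and> (\<forall>(r, x)\<in>P. \<forall>\<theta>\<in>sphere 0 1. m \<le> Fw g w r x \<theta> \<and> Fw g w r x \<theta> \<le> M)"
proof -
  obtain m M L where m: "0 < m" "m \<le> M"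
    and bounds: "\<And>r x \<theta>. (r, x) \<in> admissible_pairs g \<alpha> a N \<Longrightarrow> \<theta> \<in> sphere 0 1 \<Longrightarrow>
           m \<le> w (boundary_dist g r x \<theta>) \<and> w (boundary_dist g r x \<theta>) \<le> M"
    and lip: "\<And>r x. (r, x) \<in> admissible_pairs g \<alpha> a N \<Longrightarrow>
           L-lipschitz_on (sphere 0 1) (\<lambda>\<theta>. w (boundary_dist g r x \<theta>))"
    by (rule weight_estimates) (rule that)
  have "m / (M * measure (surf::'a measure) (sphere 0 1)) \<le> Fw g w r x \<theta>
      \<and> Fw g w r x \<theta> \<le> M / (m * measure (surf::'a measure) (sphere 0 1))"
    if "(r, x) \<in> P" "\<theta> \<in> sphere 0 1" for r x \<theta>
    using normalized_density_bounds[OF lipschitz_on_continuous_on[OF lip] m(1) _ that(2)]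
      bounds subsetD[OF assms that(1)]
    by (simp add: Fw_eq_normalized)
  moreover have "0 < m / (M * measure (surf::'a measure) (sphere 0 1))"
    using m surf_pos by simp
  ultimately show ?thesis
    by blast
qed

lemma Fw_lipschitz_on_sphere:
  assumes "P \<subseteq> admissible_pairs g \<alpha> a N"
  shows "\<exists>L. \<forall>(r, x)\<in>P. L-lipschitz_on (sphere 0 1) (Fw g w r x)"
proof -
  obtain m M L where m: "0 < m"
    and bounds: "\<And>r x \<theta>. (r, x) \<in> admissible_pairs g \<alpha> a N \<Longrightarrow> \<theta> \<in> sphere 0 1 \<Longrightarrow>
           m \<le> w (boundary_dist g r x \<theta>) \<and> w (boundary_dist g r x \<theta>) \<le> M"
    and lip: "\<And>r x. (r, x) \<in> admissible_pairs g \<alpha> a N \<Longrightarrow>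
           L-lipschitz_on (sphere 0 1) (\<lambda>\<theta>. w (boundary_dist g r x \<theta>))"
    by (rule weight_estimates) (rule that)
  have "(L / (m * measure (surf::'a measure) (sphere 0 1)))-lipschitz_on (sphere 0 1) (Fw g w r x)"
    if "(r, x) \<in> P" for r x
    using normalized_density_lipschitz[OF lipschitz_on_continuous_on[OF lip] m _ lip]
      bounds subsetD[OF assms that]
    by (simp add: Fw_eq_normalized)
  then show ?thesis
    by blast
qed

lemma Fw_pointwise_diff:
  obtains C where "0 \<le> C"
    and "\<And>r x r' x' E \<theta>. (r, x) \<in> admissible_pairs g \<alpha> a N \<Longrightarrow> (r', x') \<in> admissible_pairs g \<alpha> a N \<Longrightarrow>
           \<forall>\<phi>\<in>sphere 0 1. \<bar>conv r g \<phi> - conv r' g \<phi>\<bar> \<le> E \<Longrightarrow> \<theta> \<in> sphere 0 1 \<Longrightarrow>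
           \<bar>Fw g w r x \<theta> - Fw g w r' x' \<theta>\<bar> \<le> C * (E + dist x x')"
proof -
  define \<omega> where "\<omega> = measure (surf::'a measure) (sphere 0 1)"
  obtain m M L where m: "0 < m" "m \<le> M" and "0 \<le> L"
    and bounds: "\<And>r x \<theta>. (r, x) \<in> admissible_pairs g \<alpha> a N \<Longrightarrow> \<theta> \<in> sphere 0 1 \<Longrightarrow>
           m \<le> w (boundary_dist g r x \<theta>) \<and> w (boundary_dist g r x \<theta>) \<le> M"
    and lip: "\<And>r x. (r, x) \<in> admissible_pairs g \<alpha> a N \<Longrightarrow>
           L-lipschitz_on (sphere 0 1) (\<lambda>\<theta>. w (boundary_dist g r x \<theta>))"
    and diff: "\<And>r x r' x' \<theta>. (r, x) \<in> admissible_pairs g \<alpha> a N \<Longrightarrow> (r', x') \<in> admissible_pairs g \<alpha> a N \<Longrightarrow>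
           \<theta> \<in> sphere 0 1 \<Longrightarrow> \<bar>w (boundary_dist g r x \<theta>) - w (boundary_dist g r' x' \<theta>)\<bar>
             \<le> L * (\<bar>conv r g \<theta> - conv r' g \<theta>\<bar> + dist x x')"
    by (rule weight_estimates) (rule that)
  have cont: "continuous_on (sphere 0 1) (\<lambda>\<theta>. w (boundary_dist g r x \<theta>))"
    if "(r, x) \<in> admissible_pairs g \<alpha> a N" for r x
    using lipschitz_on_continuous_on[OF lip[OF that]] .
  have "\<bar>Fw g w r x \<theta> - Fw g w r' x' \<theta>\<bar> \<le> (1 / (m * \<omega>) + M / (m\<^sup>2 * \<omega>)) * L * (E + dist x x')"
    if rx: "(r, x) \<in> admissible_pairs g \<alpha> a N" and rx': "(r', x') \<in> admissible_pairs g \<alpha> a N"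
      and E: "\<forall>\<phi>\<in>sphere 0 1. \<bar>conv r g \<phi> - conv r' g \<phi>\<bar> \<le> E" and \<theta>: "\<theta> \<in> sphere 0 1"
    for r x r' x' E \<theta>
  proof -
    have "\<forall>\<phi>\<in>sphere 0 1. \<bar>w (boundary_dist g r x \<phi>) - w (boundary_dist g r' x' \<phi>)\<bar> \<le> L * (E + dist x x')"
      using diff[OF rx rx'] E \<open>0 \<le> L\<close> by (fastforce intro: order_trans mult_left_mono)
    from normalized_density_diff[OF cont[OF rx] cont[OF rx'] m(1) _ _ this \<theta>]
    show ?thesis
      using bounds[OF rx] bounds[OF rx'] by (simp add: Fw_eq_normalized \<omega>_def mult.assoc)
  qed
  moreover have "0 \<le> (1 / (m * \<omega>) + M / (m\<^sup>2 * \<omega>)) * L"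
    using m \<open>0 \<le> L\<close> surf_pos by (simp add: \<omega>_def)
  ultimately show ?thesis
    using that by blast
qed

lemma Fw_lipschitz_norm2:
  assumes "P \<subseteq> admissible_pairs g \<alpha> a N"
  shows "\<exists>L. \<forall>(r, x)\<in>P. \<forall>(r', x')\<in>P.
    norm2 (\<lambda>\<theta>. Fw g w r x \<theta> - Fw g w r' x' \<theta>) \<le> L * (norm2 (\<lambda>\<theta>. r \<theta> - r' \<theta>) + dist x x')"
proof -
  define \<omega> where "\<omega> = measure (surf::'a measure) (sphere 0 1)"
  obtain C where C: "0 \<le> C"
    and diff: "\<And>r x r' x' E \<theta>. (r, x) \<in> admissible_pairs g \<alpha> a N \<Longrightarrow> (r', x') \<in> admissible_pairs g \<alpha> a N \<Longrightarrow>
           \<forall>\<phi>\<in>sphere 0 1. \<bar>conv r g \<phi> - conv r' g \<phi>\<bar> \<le> E \<Longrightarrow> \<theta> \<in> sphere 0 1 \<Longrightarrow>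
           \<bar>Fw g w r x \<theta> - Fw g w r' x' \<theta>\<bar> \<le> C * (E + dist x x')"
    by (rule Fw_pointwise_diff) (rule that)
  have "norm2 (\<lambda>\<theta>. Fw g w r x \<theta> - Fw g w r' x' \<theta>) \<le> (C * G + C * sqrt \<omega>) * (norm2 (\<lambda>\<theta>. r \<theta> - r' \<theta>) + dist x x')"
    if "(r, x) \<in> P" "(r', x') \<in> P" for r x r' x'
  proof -
    have rx: "(r, x) \<in> admissible_pairs g \<alpha> a N" and rx': "(r', x') \<in> admissible_pairs g \<alpha> a N"
      using assms that by auto
    define n where "n = norm2 (\<lambda>\<theta>. r \<theta> - r' \<theta>)"
    have cont: "continuous_on (sphere 0 1) r" "continuous_on (sphere 0 1) r'"
      using rx rx' by (auto simp: admissible_pairs_def radial_class_def)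
    have "continuous_on (sphere 0 1) (\<lambda>\<theta>. r \<theta> - r' \<theta>)"
      using cont by (intro continuous_intros)
    then have "\<forall>\<phi>\<in>sphere 0 1. \<bar>conv r g \<phi> - conv r' g \<phi>\<bar> \<le> G * n / sqrt \<omega>"
      using abs_conv_le_norm2 conv_diff[OF cont] by (simp add: n_def \<omega>_def)
    then have "\<forall>\<theta>\<in>sphere 0 1. \<bar>Fw g w r x \<theta> - Fw g w r' x' \<theta>\<bar> \<le> C * (G * n / sqrt \<omega> + dist x x')"
      using diff[OF rx rx'] by blast
    then have "norm2 (\<lambda>\<theta>. Fw g w r x \<theta> - Fw g w r' x' \<theta>) \<le> C * (G * n / sqrt \<omega> + dist x x') * sqrt \<omega>"
      unfolding \<omega>_def by (rule norm2_le)
    also have "\<dots> = C * G * n + C * sqrt \<omega> * dist x x'"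
      using surf_pos by (simp add: \<omega>_def algebra_simps)
    also have "\<dots> \<le> (C * G + C * sqrt \<omega>) * (n + dist x x')"
    proof -
      have "0 \<le> C * G * dist x x'" "0 \<le> C * sqrt \<omega> * n"
        using C kernel_bound_nonneg surf_pos by (simp_all add: n_def norm2_def \<omega>_def)
      then show ?thesis by (simp add: algebra_simps)
    qed
    finally show ?thesis by (simp add: n_def)
  qed
  then show ?thesis by blast
qed

lemma Fw_lipschitz_normInf:
  assumes "P \<subseteq> admissible_pairs g \<alpha> a N"
  shows "\<exists>L. \<forall>(r, x)\<in>P. \<forall>(r', x')\<in>P.
    normInf (\<lambda>\<theta>. Fw g w r x \<theta> - Fw g w r' x' \<theta>) \<le> L * (normInf (\<lambda>\<theta>. r \<theta> - r' \<theta>) + dist x x')"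
proof -
  obtain C where C: "0 \<le> C"
    and diff: "\<And>r x r' x' E \<theta>. (r, x) \<in> admissible_pairs g \<alpha> a N \<Longrightarrow> (r', x') \<in> admissible_pairs g \<alpha> a N \<Longrightarrow>
           \<forall>\<phi>\<in>sphere 0 1. \<bar>conv r g \<phi> - conv r' g \<phi>\<bar> \<le> E \<Longrightarrow> \<theta> \<in> sphere 0 1 \<Longrightarrow>
           \<bar>Fw g w r x \<theta> - Fw g w r' x' \<theta>\<bar> \<le> C * (E + dist x x')"
    by (rule Fw_pointwise_diff) (rule that)
  have "normInf (\<lambda>\<theta>. Fw g w r x \<theta> - Fw g w r' x' \<theta>) \<le> (C * G + C) * (normInf (\<lambda>\<theta>. r \<theta> - r' \<theta>) + dist x x')"
    if "(r, x) \<in> P" "(r', x') \<in> P" for r x r' x'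
  proof -
    have rx: "(r, x) \<in> admissible_pairs g \<alpha> a N" and rx': "(r', x') \<in> admissible_pairs g \<alpha> a N"
      using assms that by auto
    define n where "n = normInf (\<lambda>\<theta>. r \<theta> - r' \<theta>)"
    have cont: "continuous_on (sphere 0 1) r" "continuous_on (sphere 0 1) r'"
      using rx rx' by (auto simp: admissible_pairs_def radial_class_def)
    then have n: "\<forall>\<theta>\<in>sphere 0 1. \<bar>r \<theta> - r' \<theta>\<bar> \<le> n"
      unfolding n_def by (intro ballI abs_le_normInf continuous_intros)
    have "\<forall>\<phi>\<in>sphere 0 1. \<bar>conv r g \<phi> - conv r' g \<phi>\<bar> \<le> G * n"
      using abs_conv_le[OF n] conv_diff[OF cont] by simp
    then have "\<forall>\<theta>\<in>sphere 0 1. \<bar>Fw g w r x \<theta> - Fw g w r' x' \<theta>\<bar> \<le> C * (G * n + dist x x')"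
      using diff[OF rx rx'] by blast
    then have "normInf (\<lambda>\<theta>. Fw g w r x \<theta> - Fw g w r' x' \<theta>) \<le> C * (G * n + dist x x')"
      by (rule normInf_le)
    also have "\<dots> \<le> (C * G + C) * (n + dist x x')"
    proof -
      have "0 \<le> C * G * dist x x'" "0 \<le> C * n"
        using C kernel_bound_nonneg nonneg_if_abs_le_on_sphere[OF n] by simp_all
      then show ?thesis by (simp add: algebra_simps)
    qed
    finally show ?thesis by (simp add: n_def)
  qed
  then show ?thesis by blast
qed

end

end

end

theorem proposition4p10:
  fixes \<eta>0 c a :: real and \<phi> w g :: "real \<Rightarrow> real"
    and \<alpha> :: "real \<times> 'a::euclidean_space \<Rightarrow> real"
  assumes dim: "DIM('a) \<ge> 2"
    and eta: "0 < \<eta>0" "\<eta>0 < 1"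
    and phi_nonneg: "\<forall>t. 0 \<le> \<phi> t"
    and phi_cont: "continuous_on UNIV \<phi>"
    and phi_supp: "\<forall>t. t \<notin> {-1..1} \<longrightarrow> \<phi> t = 0"
    and phi_C3: "C3_on {-1..1} \<phi>"
    and phi_norm: "(SUP t. \<bar>\<phi> t\<bar>) = 1"
    and g_def: "g = (\<lambda>t. c / omega (DIM('a) - 1) * \<eta>0 powr (- (real DIM('a) - 1))
                        * \<phi> (1 - (1 - t) / \<eta>0\<^sup>2))"
    and c_norm: "\<forall>z\<in>sphere (0::'a) 1. conv (\<lambda>_. 1) g z = 1"
    and alpha_lip: "locally_lipschitz_on ({0<..} \<times> sphere 0 1) \<alpha>"
    and alpha_bd: "\<forall>l>0. \<forall>z\<in>sphere 0 1. 0 \<le> \<alpha> (l, z) \<and> \<alpha> (l, z) < l"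
    and w_lip: "locally_lipschitz_on {0<..} w"
    and w_pos: "\<forall>t>0. 0 < w t"
    and a: "0 < a" "a < 1"
  shows
    "(\<exists>L. \<forall>(r, x)\<in>Aeset g \<alpha> normInf a. \<forall>(r', x')\<in>Aeset g \<alpha> normInf a.
        norm2 (\<lambda>\<theta>. Fw g w r x \<theta> - Fw g w r' x' \<theta>) \<le> L * (norm2 (\<lambda>\<theta>. r \<theta> - r' \<theta>) + dist x x'))
   \<and> (\<exists>L. \<forall>(r, x)\<in>Aeset g \<alpha> normInf a. \<forall>(r', x')\<in>Aeset g \<alpha> normInf a.
        normInf (\<lambda>\<theta>. Fw g w r x \<theta> - Fw g w r' x' \<theta>) \<le> L * (normInf (\<lambda>\<theta>. r \<theta> - r' \<theta>) + dist x x'))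
   \<and> (\<exists>M. \<forall>(r, x)\<in>Aeset g \<alpha> normInf a. lipschitz_on M (sphere 0 1) (Fw g w r x))
   \<and> (\<exists>m M. 0 < m \<and> (\<forall>(r, x)\<in>Aeset g \<alpha> norm2 a. \<forall>\<theta>\<in>sphere 0 1.
        m \<le> Fw g w r x \<theta> \<and> Fw g w r x \<theta> \<le> M))"
proof -
  txt \<open>The hypotheses \<open>dim\<close>, \<open>\<eta>0 < 1\<close>, \<open>phi_norm\<close> and \<open>a < 1\<close> only fix the normalisation in the
    paper; the estimates hold without them.\<close>
  have "sphere (0::'a) 1 \<noteq> {}" by simp
  then obtain z0 :: 'a where z0: "z0 \<in> sphere 0 1" by blast
  let ?\<omega> = "measure (surf::'a measure) (sphere 0 1)"
  have surf_pos: "0 < ?\<omega>"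
    using surf_pos_if_conv_eq_one c_norm z0 by blast
  obtain G K where g_nonneg: "\<forall>t. 0 \<le> g t" and g_le: "\<forall>t. g t \<le> G" and g_lip: "K-lipschitz_on UNIV g"
    by (rule scaled_bump_kernel[OF phi_nonneg phi_cont phi_supp phi_C3 eta(1) g_def c_norm[rule_format, OF z0]])
  note kernel = surf_pos g_nonneg g_le g_lip c_norm a(1)
  have "0 \<le> sqrt ?\<omega> / a" "0 \<le> 1 / a"
    using a(1) by simp_all
  note setting_inf = kernel this(1) alpha_lip alpha_bd w_lip w_pos
    and setting_L2 = kernel this(2) alpha_lip alpha_bd w_lip w_pos
  have "Aeset g \<alpha> normInf a \<subseteq> admissible_pairs g \<alpha> a (sqrt ?\<omega> / a)"
    by (rule Aeset_subset_admissible_pairs[OF Aset_normInf_subset_radial_class[OF surf_pos a(1)]])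
  note Aeset_inf = setting_inf this
  have "Aeset g \<alpha> norm2 a \<subseteq> admissible_pairs g \<alpha> a (1 / a)"
    by (rule Aeset_subset_admissible_pairs[OF Aset_norm2_subset_radial_class])
  note Aeset_L2 = setting_L2 this
  show ?thesis
    using Fw_lipschitz_norm2[OF Aeset_inf] Fw_lipschitz_normInf[OF Aeset_inf]
      Fw_lipschitz_on_sphere[OF Aeset_inf] Fw_bounds[OF Aeset_L2]
    by blast
qed

end
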